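(* Let $S$ be the shearlet group. There exists a nonzero function $F\in L^2(S)$ that has linearly dependent left translations, i.e. there are distinct $g_1,\dots,g_m\in S$ and nonzero $c_1,\dots,c_m\in\mathbb{C}$ with $\sum_k c_k L(g_k)F=0$.
   Context: For $a>0$ and $s\in\mathbb{R}$ let $A_a=\begin{pmatrix} a&0\\0&\sqrt a\end{pmatrix}$ and $S_s=\begin{pmatrix}1&s\\0&1\end{pmatrix}$, and let $\mathcal{G}=\{S_sA_a: a>0, s\in\mathbb{R}\}$. The shearlet group is $S=\mathcal{G}\ltimes\mathbb{R}^2$ with multiplication $(M,t)(M',t')=(MM',t+Mt')$ ($t\in\mathbb{R}^2$ a column vector). Its left Haar measure is $\frac{da\,ds\,dt}{a^3}$, with respect to which $L^2(S)$ is taken; $L(g)F(x)=F(g^{-1}x)$. *)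

theory Defs
  imports "HOL-Analysis.Analysis"
begin

definition A_mat :: "real \<Rightarrow> real^2^2" where
  "A_mat a = vector [vector [a, 0], vector [0, sqrt a]]"

definition S_mat :: "real \<Rightarrow> real^2^2" where
  "S_mat s = vector [vector [1, s], vector [0, 1]]"

type_synonym shearlet = "(real^2^2) \<times> (real^2)"

definition shearlet_group :: "shearlet set" where
  "shearlet_group = {(S_mat s ** A_mat a, t) | a s t. a > 0}"

definition sh_mult :: "shearlet \<Rightarrow> shearlet \<Rightarrow> shearlet" where
  "sh_mult g h = (fst g ** fst h, snd g + fst g *v snd h)"

definition sh_inv :: "shearlet \<Rightarrow> shearlet" where
  "sh_inv g = (matrix_inv (fst g), - (matrix_inv (fst g) *v snd g))"

definition sh_param :: "real \<times> real \<times> (real^2) \<Rightarrow> shearlet" where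
  "sh_param p = (case p of (a, s, t) \<Rightarrow> (S_mat s ** A_mat a, t))"

definition shearlet_haar :: "shearlet measure" where
  "shearlet_haar = distr
     (density lborel (\<lambda>(a, s, t). indicator {0<..} a * ennreal (1 / a ^ 3)))
     borel sh_param"

definition left_transl :: "shearlet \<Rightarrow> (shearlet \<Rightarrow> complex) \<Rightarrow> shearlet \<Rightarrow> complex" where
  "left_transl g F x = F (sh_mult (sh_inv g) x)"

definition in_L2_shearlet :: "(shearlet \<Rightarrow> complex) \<Rightarrow> bool" where
  "in_L2_shearlet F \<longleftrightarrow> F \<in> borel_measurable shearlet_haar
     \<and> integrable shearlet_haar (\<lambda>x. (norm (F x))\<^sup>2)"

end

theory Submission
  imports Defs
begin

text \<open>The function F (haar_wedge) is a Haar-type function of the first translation coordinate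
  at scale a, weighted by a^(1/4) and cut off to a wedge in the remaining coordinates. Dilating by
  A_(1/n) and translating by (k/n, 0), k < n, gives n translates whose sum telescopes back to
  n^(1/4) F; this refinement equation is a nontrivial linear relation among n + 1 left translates.
  F is square integrable because the symmetric difference of the two intervals in its profile
  has length 2 min(a, 1), which leaves min(a, 1) a^(-3/2) to integrate over a > 0; and F does not
  vanish on an open box of coordinates (a, s, t).\<close>

lemma matrix_inv_eqI:
  fixes A B :: "'a::semiring_1^'n^'n"
  assumes "A ** B = mat 1" and "B ** A = mat 1"
  shows "matrix_inv A = B"
proof -
  have "A ** matrix_inv A = mat 1 \<and> matrix_inv A ** A = mat 1"
    unfolding matrix_inv_def by (rule someI[of _ B]) (use assms in simp)
  then have "matrix_inv A = matrix_inv A ** (A ** B)" and "matrix_inv A ** A = mat 1"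
    using assms by (simp_all add: matrix_mul_rid)
  then show ?thesis by (simp add: matrix_mul_assoc matrix_mul_lid)
qed

lemma matrix_matrix_mult_2_nth:
  fixes A :: "'a::semiring_1^2^'m" and B :: "'a^'n^2"
  shows "(A ** B) $ i $ j = A$i$1 * B$1$j + A$i$2 * B$2$j"
  by (simp add: matrix_matrix_mult_def sum_2)

lemma matrix_vector_mult_2_nth:
  fixes A :: "'a::semiring_1^2^'m"
  shows "(A *v x) $ i = A$i$1 * x$1 + A$i$2 * x$2"
  by (simp add: matrix_vector_mult_def sum_2)

lemma measurable_fst_borel [measurable (raw)]:
  fixes f :: "'c \<Rightarrow> 'a::topological_space \<times> 'b::topological_space"
  shows "f \<in> borel_measurable M \<Longrightarrow> (\<lambda>x. fst (f x)) \<in> borel_measurable M"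
  by (erule measurable_compose) (intro borel_measurable_continuous_onI continuous_intros)

lemma measurable_snd_borel [measurable (raw)]:
  fixes f :: "'c \<Rightarrow> 'a::topological_space \<times> 'b::topological_space"
  shows "f \<in> borel_measurable M \<Longrightarrow> (\<lambda>x. snd (f x)) \<in> borel_measurable M"
  by (erule measurable_compose) (intro borel_measurable_continuous_onI continuous_intros)

lemma measurable_vec_nth_borel [measurable (raw)]:
  fixes f :: "'c \<Rightarrow> 'a::real_normed_vector^'n"
  shows "f \<in> borel_measurable M \<Longrightarrow> (\<lambda>x. f x $ i) \<in> borel_measurable M"
  by (erule measurable_compose) (intro borel_measurable_continuous_onI continuous_intros)

lemma nn_integral_lborel_iterated:
  fixes f :: "'a::euclidean_space \<times> 'b::euclidean_space \<Rightarrow> ennreal"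
  assumes "f \<in> borel_measurable borel"
  shows "(\<integral>\<^sup>+p. f p \<partial>lborel) = (\<integral>\<^sup>+x. \<integral>\<^sup>+y. f (x, y) \<partial>lborel \<partial>lborel)"
proof -
  have "f \<in> borel_measurable (lborel \<Otimes>\<^sub>M lborel)"
    using assms by (simp add: lborel_prod)
  from lborel.nn_integral_fst[OF this] show ?thesis
    by (simp add: lborel_prod)
qed

lemma emeasure_lborel_cbox_vec2:
  fixes l u :: "real^2"
  assumes "l$1 \<le> u$1" "l$2 \<le> u$2"
  shows "emeasure lborel (cbox l u) = ennreal ((u$1 - l$1) * (u$2 - l$2))"
proof -
  have "cbox l u \<noteq> {}"
    using assms by (auto simp: mem_box_cart forall_2 intro!: exI[of _ l])
  then have "measure lborel (cbox l u) = (u$1 - l$1) * (u$2 - l$2)"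
    by (simp add: content_cbox_cart UNIV_2)
  then show ?thesis
    using emeasure_lborel_cbox_finite[of l u] by (simp add: emeasure_eq_ennreal_measure)
qed

lemma box_Pair_eq: "box (a, c) (b, d) = box a b \<times> box c d"
  by (force simp: box_def Basis_prod_def)

lemma emeasure_lborel_box_pos:
  fixes l u :: "'a::euclidean_space"
  assumes "box l u \<noteq> {}"
  shows "0 < emeasure lborel (box l u)"
  using assms by (simp add: box_ne_empty emeasure_lborel_box_eq prod_pos less_imp_le inner_diff_left)

lemma A_mat_nth [simp]:
  "A_mat a $1$1 = a" "A_mat a $1$2 = 0" "A_mat a $2$1 = 0" "A_mat a $2$2 = sqrt a"
  by (simp_all add: A_mat_def)

lemma S_mat_0: "S_mat 0 = mat 1"
  by (simp add: S_mat_def vec_eq_iff forall_2 mat_def)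

lemma A_mat_1: "A_mat 1 = mat 1"
  by (simp add: vec_eq_iff forall_2 mat_def)

lemma A_mat_mult: "A_mat a ** A_mat b = A_mat (a * b)"
  by (simp add: vec_eq_iff forall_2 matrix_matrix_mult_2_nth real_sqrt_mult)

lemma matrix_inv_A_mat: "a \<noteq> 0 \<Longrightarrow> matrix_inv (A_mat a) = A_mat (1 / a)"
  by (intro matrix_inv_eqI) (simp_all add: A_mat_mult A_mat_1)

lemma A_mat_mult_nth [simp]:
  "(A_mat c ** M) $1$j = c * M$1$j" "(A_mat c ** M) $2$j = sqrt c * M$2$j"
  by (simp_all add: matrix_matrix_mult_2_nth)

lemma A_mat_mult_vec_nth [simp]:
  "(A_mat c *v t) $1 = c * t$1" "(A_mat c *v t) $2 = sqrt c * t$2"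
  by (simp_all add: matrix_vector_mult_2_nth)

lemma S_mat_A_mat_nth [simp]:
  "(S_mat s ** A_mat a) $1$1 = a" "(S_mat s ** A_mat a) $1$2 = s * sqrt a"
  "(S_mat s ** A_mat a) $2$1 = 0" "(S_mat s ** A_mat a) $2$2 = sqrt a"
  by (simp_all add: matrix_matrix_mult_2_nth S_mat_def)

lemma dilation_in_shearlet_group: "0 < a \<Longrightarrow> (A_mat a, t) \<in> shearlet_group"
  unfolding shearlet_group_def
  by (intro CollectI exI[of _ a] exI[of _ 0] exI[of _ t]) (simp add: S_mat_0)

lemma left_transl_dilation:
  assumes "b \<noteq> 0"
  shows "left_transl (A_mat b, v) F x = F (A_mat (1 / b) ** fst x, A_mat (1 / b) *v (snd x - v))"
  using assms
  by (simp add: left_transl_def sh_inv_def sh_mult_def matrix_inv_A_mat matrix_vector_mult_diff_distrib)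

section \<open>A refinable function\<close>

definition window :: "real \<Rightarrow> real \<Rightarrow> real" where
  "window a u = (if - a < u \<and> u \<le> 0 then 1 else 0)"

lemma window_scale:
  assumes "0 < c"
  shows "window (c * a) (c * u) = window a u"
proof -
  have "- (c * a) < c * u \<longleftrightarrow> - a < u"
    using mult_less_cancel_left_pos[OF assms, of "- a" u] by simp
  moreover have "c * u \<le> 0 \<longleftrightarrow> u \<le> 0"
    using assms by (simp add: mult_le_0_iff)
  ultimately show ?thesis by (simp add: window_def)
qed

lemma sum_window_telescope:
  fixes n :: nat and a t :: real
  assumes "0 < n"
  shows "(\<Sum>k<n. window (n * a) (n * t - k - 1) - window (n * a) (n * t - k))
    = window a (t - 1) - window a t"
proof -
  define f where "f k = window a (t - k / n)" for k :: nat
  have "window (n * a) (n * t - k - 1) - window (n * a) (n * t - k) = f (Suc k) - f k" for k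
  proof -
    have "n * t - k - 1 = n * (t - Suc k / n)" "n * t - k = n * (t - k / n)"
      using assms by (simp_all add: field_simps)
    then show ?thesis
      using assms by (simp only: f_def window_scale of_nat_0_less_iff)
  qed
  then have "(\<Sum>k<n. window (n * a) (n * t - k - 1) - window (n * a) (n * t - k)) = f n - f 0"
    by (simp only: sum_lessThan_telescope)
  then show ?thesis
    using assms by (simp add: f_def)
qed

definition wedge_profile :: "real \<Rightarrow> real \<Rightarrow> real \<Rightarrow> real \<Rightarrow> real \<Rightarrow> real" where
  "wedge_profile a m d t1 t2 =
     (if 0 \<le> m \<and> m \<le> a \<and> 0 \<le> t2 \<and> t2 \<le> d
      then a powr (1/4) * (window a (t1 - 1) - window a t1) else 0)"

text \<open>At x = (S_s A_a, t) the matrix entries read here are a, s * sqrt a and sqrt a, so the cut-off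
  is the wedge 0 \<le> s \<le> sqrt a, 0 \<le> t_2 \<le> sqrt a.\<close>

definition haar_wedge :: "shearlet \<Rightarrow> complex" where
  "haar_wedge x = of_real (wedge_profile (fst x$1$1) (fst x$1$2) (fst x$2$2) (snd x$1) (snd x$2))"

lemma wedge_profile_refinement:
  fixes n :: nat and a m d t1 t2 :: real
  assumes "0 < n"
  shows "(\<Sum>k<n. wedge_profile (n * a) (n * m) (sqrt n * d) (n * t1 - k) (sqrt n * t2))
    = n powr (1/4) * wedge_profile a m d t1 t2"
proof -
  have wedge_iff: "(0 \<le> n * m \<and> n * m \<le> n * a \<and> 0 \<le> sqrt n * t2 \<and> sqrt n * t2 \<le> sqrt n * d)
      \<longleftrightarrow> (0 \<le> m \<and> m \<le> a \<and> 0 \<le> t2 \<and> t2 \<le> d)"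
    using assms by (simp add: zero_le_mult_iff)
  show ?thesis
  proof (cases "0 \<le> m \<and> m \<le> a \<and> 0 \<le> t2 \<and> t2 \<le> d")
    case True
    then have "(\<Sum>k<n. wedge_profile (n * a) (n * m) (sqrt n * d) (n * t1 - k) (sqrt n * t2))
        = (n * a) powr (1/4) * (\<Sum>k<n. window (n * a) (n * t1 - k - 1) - window (n * a) (n * t1 - k))"
      by (simp only: wedge_profile_def wedge_iff if_True sum_distrib_left diff_diff_eq simp_thms)
    also have "\<dots> = n powr (1/4) * wedge_profile a m d t1 t2"
      using True by (simp add: sum_window_telescope assms powr_mult wedge_profile_def)
    finally show ?thesis .
  next
    case False
    then show ?thesis by (simp only: wedge_profile_def wedge_iff if_False) simp
  qed
qed

definition refinement_shift :: "nat \<Rightarrow> nat \<Rightarrow> shearlet" where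
  "refinement_shift n k = (A_mat (1 / n), vector [k / n, 0])"

lemma left_transl_refinement_shift:
  assumes "0 < n"
  shows "left_transl (refinement_shift n k) haar_wedge x =
    of_real (wedge_profile (n * fst x$1$1) (n * fst x$1$2) (sqrt n * fst x$2$2)
                           (n * snd x$1 - k) (sqrt n * snd x$2))"
  using assms
  by (simp add: refinement_shift_def left_transl_dilation haar_wedge_def real_sqrt_divide
      right_diff_distrib)

lemma haar_wedge_refinement:
  assumes "0 < n"
  shows "(\<Sum>k<n. left_transl (refinement_shift n k) haar_wedge x) = of_real (n powr (1/4)) * haar_wedge x"
  using wedge_profile_refinement[OF assms]
  by (simp add: left_transl_refinement_shift assms haar_wedge_def flip: of_real_sum)

definition refinement_family :: "nat \<Rightarrow> nat \<Rightarrow> shearlet" where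
  "refinement_family n k = (if k < n then refinement_shift n k else (A_mat 1, 0))"

definition refinement_coeff :: "nat \<Rightarrow> nat \<Rightarrow> complex" where
  "refinement_coeff n k = (if k < n then 1 else - of_real (n powr (1/4)))"

lemma refinement_family_dependent:
  assumes "0 < n"
  shows "(\<Sum>k<Suc n. refinement_coeff n k * left_transl (refinement_family n k) haar_wedge x) = 0"
proof -
  have "left_transl (A_mat 1, 0) haar_wedge x = haar_wedge x"
    using left_transl_dilation[of 1 0 haar_wedge x] by (simp add: A_mat_1)
  then show ?thesis
    using haar_wedge_refinement[OF assms]
    by (simp add: refinement_coeff_def refinement_family_def)
qed

lemma refinement_family_in_shearlet_group: "0 < n \<Longrightarrow> refinement_family n k \<in> shearlet_group"
  by (simp add: refinement_family_def refinement_shift_def dilation_in_shearlet_group)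

lemma inj_on_refinement_family:
  assumes "2 \<le> n"
  shows "inj_on (refinement_family n) {..<Suc n}"
proof
  fix i j assume "i \<in> {..<Suc n}" "j \<in> {..<Suc n}" and eq: "refinement_family n i = refinement_family n j"
  have "(i < n \<longleftrightarrow> j < n)"
    using arg_cong[OF eq, of "\<lambda>g. fst g $1$1"] assms
    by (auto simp: refinement_family_def refinement_shift_def split: if_splits)
  moreover have "i = j" if "i < n" "j < n"
  proof -
    have "real i / n = real j / n"
      using arg_cong[OF eq, of "\<lambda>g. snd g $1"] that
      by (simp add: refinement_family_def refinement_shift_def)
    then show ?thesis using assms by simp
  qed
  ultimately show "i = j"
    using \<open>i \<in> {..<Suc n}\<close> \<open>j \<in> {..<Suc n}\<close> by (auto simp: less_Suc_eq)
qed

section \<open>The Haar measure in coordinates\<close>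

lemma sh_param_measurable [measurable]: "sh_param \<in> borel_measurable borel"
proof -
  have sh_param_eq: "sh_param = (\<lambda>p. (fst p *\<^sub>R vector [vector [1, 0], vector [0, 0]]
      + (fst (snd p) * sqrt (fst p)) *\<^sub>R vector [vector [0, 1], vector [0, 0]]
      + sqrt (fst p) *\<^sub>R vector [vector [0, 0], vector [0, 1]], snd (snd p)))"
    by (auto simp: fun_eq_iff sh_param_def vec_eq_iff forall_2)
  show ?thesis
    unfolding sh_param_eq by (intro borel_measurable_continuous_onI continuous_intros)
qed

definition haar_density :: "real \<times> real \<times> (real^2) \<Rightarrow> ennreal" where
  "haar_density p = indicator {0<..} (fst p) * ennreal (1 / fst p ^ 3)"

lemma haar_density_measurable [measurable]: "haar_density \<in> borel_measurable borel"
  unfolding haar_density_def by measurable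

lemma shearlet_haar_eq: "shearlet_haar = distr (density lborel haar_density) borel sh_param"
  unfolding shearlet_haar_def haar_density_def by (simp add: case_prod_beta')

lemma sets_shearlet_haar [measurable_cong]: "sets shearlet_haar = sets borel"
  by (simp add: shearlet_haar_eq)

lemma nn_integral_shearlet_haar:
  assumes [measurable]: "f \<in> borel_measurable borel"
  shows "(\<integral>\<^sup>+x. f x \<partial>shearlet_haar) = (\<integral>\<^sup>+p. haar_density p * f (sh_param p) \<partial>lborel)"
  unfolding shearlet_haar_eq by (simp add: nn_integral_distr nn_integral_density)

lemma AE_shearlet_haar_iff:
  assumes [measurable]: "Measurable.pred borel P"
  shows "(AE x in shearlet_haar. P x) \<longleftrightarrow> (AE p in lborel. 0 < haar_density p \<longrightarrow> P (sh_param p))"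
  unfolding shearlet_haar_eq by (simp add: AE_distr_iff AE_density)

section \<open>Square integrability\<close>

lemma haar_wedge_measurable [measurable]: "haar_wedge \<in> borel_measurable borel"
  unfolding haar_wedge_def wedge_profile_def window_def by measurable

lemma haar_wedge_sh_param:
  "haar_wedge (sh_param (a, s, t)) = of_real (wedge_profile a (s * sqrt a) (sqrt a) (t$1) (t$2))"
  by (simp add: haar_wedge_def sh_param_def)

text \<open>The square of window a (t_1 - 1) - window a t_1 is the indicator of the symmetric difference
  of (1 - a, 1] and (-a, 0]; it is covered by two intervals of length min a 1. For a > 1 this
  cancellation is what makes the integral over large scales converge.\<close>

definition wedge_majorant :: "real \<Rightarrow> real \<Rightarrow> real^2 \<Rightarrow> real" where
  "wedge_majorant a s t =
     (if 0 < a \<and> 0 \<le> s \<and> s \<le> sqrt a \<and> 0 \<le> t$2 \<and> t$2 \<le> sqrt a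
      then a powr (-5/2) * ((if 1 - min a 1 \<le> t$1 \<and> t$1 \<le> 1 then 1 else 0)
                          + (if - a \<le> t$1 \<and> t$1 \<le> min a 1 - a then 1 else 0))
      else 0)"

lemma borel_measurable_wedge_majorant [measurable]:
  "(\<lambda>p::real \<times> real \<times> (real^2). wedge_majorant (fst p) (fst (snd p)) (snd (snd p))) \<in> borel_measurable borel"
  "(\<lambda>q::real \<times> (real^2). wedge_majorant a (fst q) (snd q)) \<in> borel_measurable borel"
  unfolding wedge_majorant_def by measurable measurable

lemma window_difference_sq_le:
  "0 < a \<Longrightarrow> (window a (u - 1) - window a u)\<^sup>2
     \<le> (if 1 - min a 1 \<le> u \<and> u \<le> 1 then 1 else 0) + (if - a \<le> u \<and> u \<le> min a 1 - a then 1 else 0)"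
  by (auto simp: window_def min_def)

lemma wedge_profile_sq_le_majorant:
  assumes "0 < a"
  shows "(wedge_profile a (s * sqrt a) (sqrt a) (t$1) (t$2))\<^sup>2 / a ^ 3 \<le> wedge_majorant a s t"
proof (cases "0 \<le> s * sqrt a \<and> s * sqrt a \<le> a \<and> 0 \<le> t$2 \<and> t$2 \<le> sqrt a")
  case True
  have "s * sqrt a \<le> sqrt a * sqrt a"
    using True assms by simp
  then have s_le: "s \<le> sqrt a"
    by (rule mult_right_le_imp_le) (simp add: assms)
  have s_ge: "0 \<le> s"
    using True assms by (simp add: zero_le_mult_iff)
  have "(a powr (1/4))\<^sup>2 / a ^ 3 = a powr (1/4 + 1/4 - 3)"
    using assms by (simp only: powr_diff powr_add power2_eq_square powr_numeral less_imp_le)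
  then have powr_factor: "(a powr (1/4))\<^sup>2 / a ^ 3 = a powr (-5/2)"
    by simp
  have "(wedge_profile a (s * sqrt a) (sqrt a) (t$1) (t$2))\<^sup>2 / a ^ 3
      = (a powr (1/4))\<^sup>2 / a ^ 3 * (window a (t$1 - 1) - window a (t$1))\<^sup>2"
    using True by (simp add: wedge_profile_def power_mult_distrib)
  also have "\<dots> = a powr (-5/2) * (window a (t$1 - 1) - window a (t$1))\<^sup>2"
    by (simp only: powr_factor)
  also have "\<dots> \<le> wedge_majorant a s t"
    using True s_le s_ge assms window_difference_sq_le[OF assms, of "t$1"]
    by (simp add: wedge_majorant_def mult_left_mono)
  finally show ?thesis .
qed (auto simp: wedge_profile_def wedge_majorant_def)

lemma haar_wedge_sq_le_majorant:
  "haar_density (a, s, t) * ennreal (norm ((cmod (haar_wedge (sh_param (a, s, t))))\<^sup>2))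
     \<le> ennreal (wedge_majorant a s t)"
proof (cases "0 < a")
  case True
  then have "haar_density (a, s, t) * ennreal (norm ((cmod (haar_wedge (sh_param (a, s, t))))\<^sup>2))
      = ennreal ((wedge_profile a (s * sqrt a) (sqrt a) (t$1) (t$2))\<^sup>2 / a ^ 3)"
    by (simp add: haar_density_def haar_wedge_sh_param ennreal_mult'[symmetric])
  also have "\<dots> \<le> ennreal (wedge_majorant a s t)"
    using wedge_profile_sq_le_majorant[OF True] by (rule ennreal_leI)
  finally show ?thesis .
qed (simp add: haar_density_def)

lemma nn_integral_wedge_majorant_t:
  "(\<integral>\<^sup>+t. ennreal (wedge_majorant a s t) \<partial>lborel) =
     ennreal (if 0 < a \<and> 0 \<le> s \<and> s \<le> sqrt a then a powr (-5/2) * (2 * min a 1 * sqrt a) else 0)"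
proof (cases "0 < a \<and> 0 \<le> s \<and> s \<le> sqrt a")
  case True
  define C1 :: "(real^2) set" where "C1 = cbox (vector [1 - min a 1, 0]) (vector [1, sqrt a])"
  define C2 :: "(real^2) set" where "C2 = cbox (vector [- a, 0]) (vector [min a 1 - a, sqrt a])"
  have "wedge_majorant a s t = a powr (-5/2) * (indicator C1 t + indicator C2 t)" for t
    using True by (simp add: wedge_majorant_def C1_def C2_def mem_box_cart forall_2 indicator_def)
  then have "ennreal (wedge_majorant a s t) = ennreal (a powr (-5/2)) * (indicator C1 t + indicator C2 t)" for t
    by (simp add: ennreal_mult ennreal_indicator[symmetric] ennreal_plus[symmetric] del: ennreal_plus)
  moreover have "emeasure lborel C1 = ennreal (min a 1 * sqrt a)"
    "emeasure lborel C2 = ennreal (min a 1 * sqrt a)"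
    using True by (simp_all add: C1_def C2_def emeasure_lborel_cbox_vec2)
  ultimately have "(\<integral>\<^sup>+t. ennreal (wedge_majorant a s t) \<partial>lborel)
      = ennreal (a powr (-5/2)) * (ennreal (min a 1 * sqrt a) + ennreal (min a 1 * sqrt a))"
    by (simp add: nn_integral_cmult nn_integral_add C1_def C2_def)
  then show ?thesis
    using True by (simp add: ennreal_mult'[symmetric] flip: ennreal_plus)
qed (auto simp: wedge_majorant_def)

lemma nn_integral_wedge_majorant:
  "(\<integral>\<^sup>+p. ennreal (wedge_majorant (fst p) (fst (snd p)) (snd (snd p))) \<partial>lborel)
     = (\<integral>\<^sup>+a. ennreal (if 0 < a then 2 * min a 1 * a powr (-3/2) else 0) \<partial>lborel)"
proof -
  have "(\<integral>\<^sup>+p. ennreal (wedge_majorant (fst p) (fst (snd p)) (snd (snd p))) \<partial>lborel)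
      = (\<integral>\<^sup>+a. \<integral>\<^sup>+s. \<integral>\<^sup>+t. ennreal (wedge_majorant a s t) \<partial>lborel \<partial>lborel \<partial>lborel)"
    by (simp add: nn_integral_lborel_iterated)
  also have "\<dots> = (\<integral>\<^sup>+a. \<integral>\<^sup>+s. ennreal (if 0 < a then a powr (-5/2) * (2 * min a 1 * sqrt a) else 0)
                        * indicator {0..sqrt a} s \<partial>lborel \<partial>lborel)"
    by (intro nn_integral_cong) (auto simp: nn_integral_wedge_majorant_t indicator_def)
  also have "\<dots> = (\<integral>\<^sup>+a. ennreal (if 0 < a then 2 * min a 1 * a powr (-3/2) else 0) \<partial>lborel)"
  proof (intro nn_integral_cong)
    fix a :: real
    have "a powr (-5/2) * (2 * min a 1 * sqrt a) * sqrt a = 2 * min a 1 * a powr (-3/2)"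
      if "0 < a"
    proof -
      have "a powr (-5/2) * (sqrt a * sqrt a) = a powr (-5/2) * a powr 1"
        using that by simp
      also have "\<dots> = a powr (-3/2)"
        by (simp only: powr_add[symmetric]) simp
      finally show ?thesis by (metis mult.commute mult.left_commute)
    qed
    then show "(\<integral>\<^sup>+s. ennreal (if 0 < a then a powr (-5/2) * (2 * min a 1 * sqrt a) else 0)
                        * indicator {0..sqrt a} s \<partial>lborel)
      = ennreal (if 0 < a then 2 * min a 1 * a powr (-3/2) else 0)"
      by (auto simp: nn_integral_cmult_indicator ennreal_mult'[symmetric])
  qed
  finally show ?thesis .
qed

lemma nn_integral_min_powr_finite:
  "(\<integral>\<^sup>+a. ennreal (if 0 < a then 2 * min a 1 * a powr (-3/2) else 0) \<partial>lborel) < \<infinity>"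
proof -
  define h :: "real \<Rightarrow> real" where
    "h a = (if a \<in> {0..1} then 2 * a powr (-1/2) else 0) + (if a \<in> {1..} then 2 * a powr (-3/2) else 0)" for a
  have "((\<lambda>a. 2 * a powr (-1/2)) has_integral 4) {0..1::real}"
    using has_integral_powr_from_0[of "-1/2" 1] by (simp add: has_integral_mult_right_iff)
  moreover have "((\<lambda>a. 2 * a powr (-3/2)) has_integral 4) {1::real..}"
    using has_integral_powr_to_inf[of "-3/2" 1] by (simp add: has_integral_mult_right_iff)
  ultimately have "(h has_integral (4 + 4)) UNIV"
    unfolding h_def by (intro has_integral_add) (simp_all only: has_integral_restrict_UNIV)
  then have integral_h: "(\<integral>\<^sup>+a. ennreal (h a) \<partial>lborel) = ennreal 8"
    by (intro nn_integral_has_integral_lborel) (simp_all add: h_def[abs_def])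
  have "ennreal (if 0 < a then 2 * min a 1 * a powr (-3/2) else 0) \<le> ennreal (h a)" for a
  proof (cases "0 < a \<and> a \<le> 1")
    case True
    have "a powr 1 * a powr (-3/2) = a powr (-1/2)"
      by (simp only: powr_add[symmetric]) simp
    then have "a * a powr (-3/2) = a powr (-1/2)"
      using True by simp
    then show ?thesis using True by (intro ennreal_leI) (simp add: h_def min_def mult.assoc)
  qed (auto intro!: ennreal_leI simp: h_def min_def)
  then have "(\<integral>\<^sup>+a. ennreal (if 0 < a then 2 * min a 1 * a powr (-3/2) else 0) \<partial>lborel) \<le> ennreal 8"
    unfolding integral_h[symmetric] by (rule nn_integral_mono)
  then show ?thesis
    by (rule le_less_trans) simp
qed

lemma in_L2_haar_wedge: "in_L2_shearlet haar_wedge"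
  unfolding in_L2_shearlet_def
proof (intro conjI integrableI_bounded)
  show "haar_wedge \<in> borel_measurable shearlet_haar" "(\<lambda>x. (cmod (haar_wedge x))\<^sup>2) \<in> borel_measurable shearlet_haar"
    by measurable
  have "(\<integral>\<^sup>+x. ennreal (norm ((cmod (haar_wedge x))\<^sup>2)) \<partial>shearlet_haar)
      = (\<integral>\<^sup>+p. haar_density p * ennreal (norm ((cmod (haar_wedge (sh_param p)))\<^sup>2)) \<partial>lborel)"
    by (rule nn_integral_shearlet_haar) measurable
  also have "\<dots> \<le> (\<integral>\<^sup>+p. ennreal (wedge_majorant (fst p) (fst (snd p)) (snd (snd p))) \<partial>lborel)"
    by (intro nn_integral_mono) (metis haar_wedge_sq_le_majorant prod.collapse)
  also have "\<dots> < \<infinity>"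
    using nn_integral_min_powr_finite by (simp only: nn_integral_wedge_majorant)
  finally show "(\<integral>\<^sup>+x. ennreal (norm ((cmod (haar_wedge x))\<^sup>2)) \<partial>shearlet_haar) < \<infinity>" .
qed

section \<open>Nonvanishing\<close>

definition wedge_test_box :: "(real \<times> real \<times> (real^2)) set" where
  "wedge_test_box = box (1/2, 0, vector [1/2, 0]) (1, 1/2, vector [1, 1/2])"

lemma haar_wedge_nonzero_on_test_box:
  assumes "p \<in> wedge_test_box"
  shows "0 < haar_density p \<and> haar_wedge (sh_param p) \<noteq> 0"
proof -
  obtain a s t where p: "p = (a, s, t)" by (metis prod.collapse)
  have bounds: "1/2 < a" "a < 1" "0 < s" "s < 1/2" "1/2 < t$1" "t$1 < 1" "0 < t$2" "t$2 < 1/2"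
    using assms by (auto simp: p wedge_test_box_def box_Pair_eq mem_box_cart forall_2)
  have "1/2 < sqrt a"
    using real_less_rsqrt[of "1/2" a] bounds by (simp add: power2_eq_square)
  moreover have "sqrt a < 1"
    using bounds by simp
  ultimately have "s * sqrt a < 1/2 * 1"
    using bounds by (intro mult_strict_mono) auto
  then have "wedge_profile a (s * sqrt a) (sqrt a) (t$1) (t$2) = a powr (1/4)"
    using bounds \<open>1/2 < sqrt a\<close> by (simp add: wedge_profile_def window_def)
  then show ?thesis
    using bounds by (simp add: p haar_density_def haar_wedge_sh_param)
qed

lemma haar_wedge_not_AE_zero: "\<not> (AE x in shearlet_haar. haar_wedge x = 0)"
proof
  assume "AE x in shearlet_haar. haar_wedge x = 0"
  then have "AE p in lborel. 0 < haar_density p \<longrightarrow> haar_wedge (sh_param p) = 0"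
    by (subst (asm) AE_shearlet_haar_iff) measurable
  then have "AE p in lborel. p \<notin> wedge_test_box"
    by eventually_elim (use haar_wedge_nonzero_on_test_box in blast)
  then have "wedge_test_box \<in> null_sets lborel"
    by (subst AE_iff_null_sets) (auto simp: wedge_test_box_def)
  moreover have "0 < emeasure lborel wedge_test_box"
  proof -
    have "(3/4, 1/4, vector [3/4, 1/4]) \<in> wedge_test_box"
      by (simp add: wedge_test_box_def box_Pair_eq mem_box_cart forall_2)
    then show ?thesis
      unfolding wedge_test_box_def by (intro emeasure_lborel_box_pos) blast
  qed
  ultimately show False
    by auto
qed

theorem proposition7p1:
  shows "\<exists>F. in_L2_shearlet F \<and> \<not> (AE x in shearlet_haar. F x = 0) \<and>
    (\<exists>(m::nat) (g::nat \<Rightarrow> shearlet) (c::nat \<Rightarrow> complex).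
       m \<ge> 1 \<and> (\<forall>k<m. g k \<in> shearlet_group) \<and> inj_on g {..<m} \<and>
       (\<forall>k<m. c k \<noteq> 0) \<and>
       (AE x in shearlet_haar. (\<Sum>k<m. c k * left_transl (g k) F x) = 0))"
proof (intro exI conjI)
  show "in_L2_shearlet haar_wedge"
    by (rule in_L2_haar_wedge)
  show "\<not> (AE x in shearlet_haar. haar_wedge x = 0)"
    by (rule haar_wedge_not_AE_zero)
  show "Suc 2 \<ge> 1"
    by simp
  show "\<forall>k<Suc 2. refinement_family 2 k \<in> shearlet_group"
    by (simp add: refinement_family_in_shearlet_group)
  show "inj_on (refinement_family 2) {..<Suc 2}"
    by (rule inj_on_refinement_family) simp
  show "\<forall>k<Suc 2. refinement_coeff 2 k \<noteq> 0"
    by (simp add: refinement_coeff_def)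
  show "AE x in shearlet_haar.
      (\<Sum>k<Suc 2. refinement_coeff 2 k * left_transl (refinement_family 2 k) haar_wedge x) = 0"
    using refinement_family_dependent[of 2] by simp
qed

end
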